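(* Let $G$ be a simple graph, $\mathcal P$ a path-circular collection of $G$, and $p=u_1,u_2,\ldots,u_k$ a path in $\mathcal P$. Write $V(G)=\{u_1,\ldots,u_k,v_{k+1},\ldots,v_r\}$ and $\mathcal A=(N(u_1),\ldots,N(u_k),N(v_{k+1}),\ldots,N(v_r))$, a presentation of $M(\mathcal P)$. Then the path $p$, viewed as a graph with vertices $u_1,\ldots,u_k$ and edges $\{u_i,u_{i+1}\}$, is a minimal $(p,\mathcal A)$-presenting graph, with presenting map $u_i\mapsto i$.
   Context: A path of $G$ is the ordered list of its distinct vertices, consecutive ones adjacent. A path-circular collection $\mathcal P$ of $G$ is a collection of (not necessarily distinct) paths of $G$ such that whenever $w_1,\ldots,w_m$ are the vertices in order of a path in $\mathcal P$ and $i\in\{2,\ldots,m-1\}$: (i) $w_i$ has degree $2$ in $G$, and (ii) every path of $\mathcal P$ containing $w_i$ also contains $w_1$ or $w_m$. For a vertex $v$, $N(v)=\{q\in\mathcal P: v\in q\}$; $M(\mathcal P)$ is the transversal matroid on ground set $\mathcal P$ whose independent sets are the partial transversals of $(N(v))_{v\in V(G)}$. For a transversal matroid $M$ with presentation $\mathcal A=(A_1,\ldots,A_r)$ and $e\in E(M)$, a graph $H$ is $(e,\mathcal A)$-presenting if there is a bijection $\phi:V(H)\to\{i: e\in A_i\}$ such that for all distinct $x,y\in V(H)$ the subgraph induced by $\{z\in V(H): A_{\phi(z)}\subseteq\mathrm{cl}^*_M(A_{\phi(x)}\cup A_{\phi(y)})\}$ is connected ($\mathrm{cl}^*_M$ the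 closure in $M^*$); it is minimal if deleting any one edge gives a graph that is not $(e,\mathcal A)$-presenting. *)

theory Defs
  imports Main
begin

definition simple_graph :: "'a set \<Rightarrow> ('a \<Rightarrow> 'a \<Rightarrow> bool) \<Rightarrow> bool" where
  "simple_graph V Eg \<longleftrightarrow> finite V \<and>
     (\<forall>u v. Eg u v \<longrightarrow> u \<in> V \<and> v \<in> V \<and> u \<noteq> v \<and> Eg v u)"

definition degree :: "'a set \<Rightarrow> ('a \<Rightarrow> 'a \<Rightarrow> bool) \<Rightarrow> 'a \<Rightarrow> nat" where
  "degree V Eg v = card {u \<in> V. Eg v u}"

definition is_path :: "'a set \<Rightarrow> ('a \<Rightarrow> 'a \<Rightarrow> bool) \<Rightarrow> 'a list \<Rightarrow> bool" where
  "is_path V Eg ps \<longleftrightarrow> ps \<noteq> [] \<and> distinct ps \<and> set ps \<subseteq> V \<and>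
     (\<forall>i. Suc i < length ps \<longrightarrow> Eg (ps ! i) (ps ! Suc i))"

text \<open>A collection of (not necessarily distinct) paths is an indexed family
  P :: 'i => 'a list over a finite index set Q; the indices are the elements of the collection.\<close>
definition path_circular :: "'a set \<Rightarrow> ('a \<Rightarrow> 'a \<Rightarrow> bool) \<Rightarrow> 'i set \<Rightarrow> ('i \<Rightarrow> 'a list) \<Rightarrow> bool" where
  "path_circular V Eg Q P \<longleftrightarrow>
     (\<forall>q\<in>Q. is_path V Eg (P q)) \<and>
     (\<forall>q\<in>Q. \<forall>i. 0 < i \<and> Suc i < length (P q) \<longrightarrow>
        degree V Eg (P q ! i) = 2 \<and>
        (\<forall>q'\<in>Q. P q ! i \<in> set (P q') \<longrightarrow>
            hd (P q) \<in> set (P q') \<or> last (P q) \<in> set (P q')))"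

definition Nbhd :: "'i set \<Rightarrow> ('i \<Rightarrow> 'a list) \<Rightarrow> 'a \<Rightarrow> 'i set" where
  "Nbhd Q P v = {q \<in> Q. v \<in> set (P q)}"

definition tr_indep :: "'e set \<Rightarrow> 'j set \<Rightarrow> ('j \<Rightarrow> 'e set) \<Rightarrow> 'e set \<Rightarrow> bool" where
  "tr_indep E J A X \<longleftrightarrow> X \<subseteq> E \<and>
     (\<exists>f. inj_on f X \<and> f ` X \<subseteq> J \<and> (\<forall>x\<in>X. x \<in> A (f x)))"

definition is_basis :: "('e set \<Rightarrow> bool) \<Rightarrow> 'e set \<Rightarrow> bool" where
  "is_basis indep B \<longleftrightarrow> indep B \<and> (\<forall>X. indep X \<and> B \<subseteq> X \<longrightarrow> X = B)"

definition dual_indep :: "('e set \<Rightarrow> bool) \<Rightarrow> 'e set \<Rightarrow> 'e set \<Rightarrow> bool" where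
  "dual_indep indep E X \<longleftrightarrow> X \<subseteq> E \<and> (\<exists>B. is_basis indep B \<and> B \<subseteq> E - X)"

definition mrank :: "('e set \<Rightarrow> bool) \<Rightarrow> 'e set \<Rightarrow> nat" where
  "mrank indep X = Max {card Y | Y. Y \<subseteq> X \<and> indep Y}"

definition mclosure :: "('e set \<Rightarrow> bool) \<Rightarrow> 'e set \<Rightarrow> 'e set \<Rightarrow> 'e set" where
  "mclosure indep E X = {e \<in> E. mrank indep (X \<union> {e}) = mrank indep X}"

definition tr_coclosure :: "'e set \<Rightarrow> 'j set \<Rightarrow> ('j \<Rightarrow> 'e set) \<Rightarrow> 'e set \<Rightarrow> 'e set" where
  "tr_coclosure E J A X = mclosure (dual_indep (tr_indep E J A) E) E X"

definition induced_connected :: "'v set set \<Rightarrow> 'v set \<Rightarrow> bool" where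
  "induced_connected EH S \<longleftrightarrow>
     (\<forall>a\<in>S. \<forall>b\<in>S. (a, b) \<in> {(x, y). x \<in> S \<and> y \<in> S \<and> {x, y} \<in> EH}\<^sup>*)"

definition presenting ::
  "'e set \<Rightarrow> 'j set \<Rightarrow> ('j \<Rightarrow> 'e set) \<Rightarrow> 'e \<Rightarrow> 'v set \<Rightarrow> 'v set set \<Rightarrow> ('v \<Rightarrow> 'j) \<Rightarrow> bool" where
  "presenting E J A e VH EH \<phi> \<longleftrightarrow>
     bij_betw \<phi> VH {j \<in> J. e \<in> A j} \<and>
     (\<forall>x\<in>VH. \<forall>y\<in>VH. x \<noteq> y \<longrightarrow>
        induced_connected EH
          {z \<in> VH. A (\<phi> z) \<subseteq> tr_coclosure E J A (A (\<phi> x) \<union> A (\<phi> y))})"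

definition minimal_presenting ::
  "'e set \<Rightarrow> 'j set \<Rightarrow> ('j \<Rightarrow> 'e set) \<Rightarrow> 'e \<Rightarrow> 'v set \<Rightarrow> 'v set set \<Rightarrow> ('v \<Rightarrow> 'j) \<Rightarrow> bool" where
  "minimal_presenting E J A e VH EH \<phi> \<longleftrightarrow>
     presenting E J A e VH EH \<phi> \<and>
     (\<forall>ed\<in>EH. \<not> presenting E J A e VH (EH - {ed}) \<phi>)"

end

theory Submission
  imports Defs
begin

(* Interior vertices of p have degree 2, so a path q of the collection that meets u_c with
   a < c < b can leave the segment u_(a+1), ..., u_(b-1) only through u_a or u_b; and it does
   leave it, because path-circularity forces q to contain an end of p. Hence
   N(u_c) is contained in N(u_a) \<union> N(u_b), so each set {z. N(z) \<subseteq> cl*(N(x) \<union> N(y))} is an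
   interval of p and therefore connected in the path graph. Minimality: for x = u_i, y = u_(i+1)
   that set contains x and y, which are disconnected once the edge u_i u_(i+1) is deleted. *)

definition path_edges :: "'a list \<Rightarrow> 'a set set" where
  "path_edges ps = {{ps ! i, ps ! Suc i} | i. Suc i < length ps}"

lemma exists_adjacent_membership_change:
  assumes "i < length xs" "j < length xs" "xs ! i \<in> T" "xs ! j \<notin> T"
  shows "\<exists>l. Suc l < length xs \<and> (xs ! l \<in> T) \<noteq> (xs ! Suc l \<in> T)"
proof (rule ccontr)
  assume "\<not> ?thesis"
  then have "n < length xs \<Longrightarrow> (xs ! n \<in> T) = (xs ! 0 \<in> T)" for n
    by (induction n) auto
  then show False using assms by metis
qed

lemma path_leaves_set:
  assumes "simple_graph V Eg" "is_path V Eg qs"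
    and "x \<in> set qs" "x \<in> T" "y \<in> set qs" "y \<notin> T"
  obtains u v where "u \<in> T" "v \<notin> T" "Eg u v" "v \<in> set qs"
proof -
  obtain i j where "i < length qs" "qs ! i = x" "j < length qs" "qs ! j = y"
    using assms(3,5) by (metis in_set_conv_nth)
  then obtain l where l: "Suc l < length qs" "(qs ! l \<in> T) \<noteq> (qs ! Suc l \<in> T)"
    using exists_adjacent_membership_change assms(4,6) by metis
  have "Eg (qs ! l) (qs ! Suc l)" "Eg (qs ! Suc l) (qs ! l)"
    using l(1) assms(1,2) unfolding is_path_def simple_graph_def by auto
  with l that show ?thesis by (metis Suc_lessD nth_mem)
qed

lemma degree_two_neighbours:
  assumes "simple_graph V Eg" "degree V Eg u = 2"
    and "Eg u x" "Eg u y" "x \<noteq> y" "Eg u v"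
  shows "v = x \<or> v = y"
proof -
  let ?N = "{z \<in> V. Eg u z}"
  have "finite ?N" "{x, y} \<subseteq> ?N" "v \<in> ?N"
    using assms(1,3,4,6) unfolding simple_graph_def by auto
  moreover have "card {x, y} = card ?N" using assms(2,5) unfolding degree_def by simp
  ultimately show ?thesis using card_subset_eq by blast
qed

lemma path_circular_interior_neighbours:
  assumes sg: "simple_graph V Eg" and pc: "path_circular V Eg Q P" and "p \<in> Q"
    and m: "0 < m" "Suc m < length (P p)" and "Eg (P p ! m) v"
  shows "v = P p ! (m - 1) \<or> v = P p ! Suc m"
proof -
  have path: "is_path V Eg (P p)" and deg: "degree V Eg (P p ! m) = 2"
    using pc \<open>p \<in> Q\<close> m unfolding path_circular_def by auto
  have "Eg (P p ! m) (P p ! Suc m)" "Eg (P p ! (m - 1)) (P p ! m)"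
    using path m unfolding is_path_def by (auto dest: spec[of _ "m - 1"])
  moreover have "P p ! (m - 1) \<noteq> P p ! Suc m"
    using path m unfolding is_path_def by (simp add: nth_eq_iff_index_eq)
  ultimately show ?thesis
    using degree_two_neighbours[OF sg deg] assms(6) sg unfolding simple_graph_def by metis
qed

lemma nth_in_image_iff:
  assumes "distinct xs" "m < length xs" "b \<le> length xs"
  shows "xs ! m \<in> (!) xs ` {a<..<b} \<longleftrightarrow> a < m \<and> m < b"
  using assms by (auto simp: nth_eq_iff_index_eq)

lemma path_circular_segment_exit:
  assumes sg: "simple_graph V Eg" and pc: "path_circular V Eg Q P"
    and "p \<in> Q" "q \<in> Q" and abc: "a < c" "c < b" "b < length (P p)"
    and c_in_q: "P p ! c \<in> set (P q)"
  shows "P p ! a \<in> set (P q) \<or> P p ! b \<in> set (P q)"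
proof -
  let ?ps = "P p" and ?T = "(!) (P p) ` {a<..<b}"
  have path_q: "is_path V Eg (P q)"
    using pc \<open>q \<in> Q\<close> unfolding path_circular_def by auto
  have dist: "distinct ?ps" and ne: "?ps \<noteq> []"
    using pc \<open>p \<in> Q\<close> unfolding path_circular_def is_path_def by auto
  have "0 < c" "Suc c < length ?ps" using abc by auto
  then have "hd ?ps \<in> set (P q) \<or> last ?ps \<in> set (P q)"
    using pc \<open>p \<in> Q\<close> \<open>q \<in> Q\<close> c_in_q unfolding path_circular_def by blast
  moreover have "hd ?ps \<notin> ?T" "last ?ps \<notin> ?T"
    using nth_in_image_iff[OF dist, of 0 b a] nth_in_image_iff[OF dist, of "length ?ps - 1" b a]
      abc ne by (auto simp: hd_conv_nth last_conv_nth)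
  moreover have "?ps ! c \<in> ?T" using abc by auto
  ultimately obtain u v where uv: "u \<in> ?T" "v \<notin> ?T" "Eg u v" "v \<in> set (P q)"
    using path_leaves_set[OF sg path_q c_in_q] by metis
  then obtain m where m: "u = ?ps ! m" "a < m" "m < b" by auto
  have "v = ?ps ! (m - 1) \<or> v = ?ps ! Suc m"
    using path_circular_interior_neighbours[OF sg pc \<open>p \<in> Q\<close>] uv(3) m abc by simp
  moreover have "m - 1 = a" if "v = ?ps ! (m - 1)"
  proof (rule ccontr)
    assume "m - 1 \<noteq> a"
    then have "m - 1 \<in> {a<..<b}" using m by auto
    then show False using uv(2) that by blast
  qed
  moreover have "Suc m = b" if "v = ?ps ! Suc m"
  proof (rule ccontr)
    assume "Suc m \<noteq> b"
    then have "Suc m \<in> {a<..<b}" using m by auto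
    then show False using uv(2) that by blast
  qed
  ultimately show ?thesis using uv(4) by auto
qed

lemma Nbhd_between_subset:
  assumes "simple_graph V Eg" "path_circular V Eg Q P" "p \<in> Q"
    and "a < c" "c < b" "b < length (P p)"
  shows "Nbhd Q P (P p ! c) \<subseteq> Nbhd Q P (P p ! a) \<union> Nbhd Q P (P p ! b)"
  using path_circular_segment_exit[OF assms(1-3) _ assms(4-6)] unfolding Nbhd_def by blast

lemma induced_connected_path_interval:
  assumes S: "S \<subseteq> set ps"
    and interval: "\<And>a b c. a < c \<Longrightarrow> c < b \<Longrightarrow> b < length ps \<Longrightarrow>
      ps ! a \<in> S \<Longrightarrow> ps ! b \<in> S \<Longrightarrow> ps ! c \<in> S"
  shows "induced_connected (path_edges ps) S"
proof -
  define R where "R = {(x, y). x \<in> S \<and> y \<in> S \<and> {x, y} \<in> path_edges ps}"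
  have edge: "(ps ! j, ps ! Suc j) \<in> R" "(ps ! Suc j, ps ! j) \<in> R"
    if "Suc j < length ps" "ps ! j \<in> S" "ps ! Suc j \<in> S" for j
    using that unfolding R_def path_edges_def by (auto simp: insert_commute)
  have chain: "(ps ! i, ps ! (i + n)) \<in> R\<^sup>* \<and> (ps ! (i + n), ps ! i) \<in> R\<^sup>*"
    if "i + n < length ps" "ps ! i \<in> S" "ps ! (i + n) \<in> S" for i n
    using that
  proof (induction n)
    case (Suc n)
    have "ps ! (i + n) \<in> S"
      using Suc.prems interval[of i "i + n" "i + Suc n"] by (cases n) auto
    with Suc edge[of "i + n"] show ?case
      by (auto intro: rtrancl_into_rtrancl converse_rtrancl_into_rtrancl)
  qed simp
  have conn: "(ps ! i, ps ! j) \<in> R\<^sup>*" if "i < length ps" "j < length ps"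
    "ps ! i \<in> S" "ps ! j \<in> S" for i j
  proof (cases "i \<le> j")
    case True
    then show ?thesis using chain[of i "j - i"] that by simp
  next
    case False
    then show ?thesis using chain[of j "i - j"] that by simp
  qed
  show ?thesis unfolding induced_connected_def R_def[symmetric]
  proof (intro ballI)
    fix x y assume "x \<in> S" "y \<in> S"
    moreover from this S obtain i j where "i < length ps" "x = ps ! i" "j < length ps" "y = ps ! j"
      by (metis in_set_conv_nth subsetD)
    ultimately show "(x, y) \<in> R\<^sup>*" using conn by blast
  qed
qed

lemma path_edges_remove_disconnects:
  assumes "distinct ps" "Suc i < length ps"
  shows "(ps ! i, ps ! Suc i) \<notin>
    {(x, y). x \<in> S \<and> y \<in> S \<and> {x, y} \<in> path_edges ps - {{ps ! i, ps ! Suc i}}}\<^sup>*"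
proof
  let ?R = "{(x, y). x \<in> S \<and> y \<in> S \<and> {x, y} \<in> path_edges ps - {{ps ! i, ps ! Suc i}}}"
  have "\<exists>m\<le>i. z = ps ! m" if "(ps ! i, z) \<in> ?R\<^sup>*" for z
    using that
  proof (induction rule: rtrancl_induct)
    case (step y z)
    then obtain m where m: "m \<le> i" "y = ps ! m" by auto
    from step(2) obtain j where j: "Suc j < length ps" "{y, z} = {ps ! j, ps ! Suc j}"
      "{y, z} \<noteq> {ps ! i, ps ! Suc i}" unfolding path_edges_def by auto
    have eq: "ps ! m = ps ! n \<longleftrightarrow> m = n" if "n < length ps" for n
      using that m assms by (simp add: nth_eq_iff_index_eq)
    from j(2) consider "y = ps ! j" "z = ps ! Suc j" | "y = ps ! Suc j" "z = ps ! j"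
      by (auto simp: doubleton_eq_iff)
    then show ?case
    proof cases
      case 1
      then show ?thesis using eq[of j] j m by (metis Suc_lessD Suc_leI le_neq_implies_less)
    next
      case 2
      then show ?thesis using eq[of "Suc j"] j m by (metis Suc_leD Suc_le_mono)
    qed
  qed auto
  moreover assume "(ps ! i, ps ! Suc i) \<in> ?R\<^sup>*"
  ultimately obtain m where "m \<le> i" "ps ! Suc i = ps ! m" by blast
  then show False using assms by (simp add: nth_eq_iff_index_eq)
qed

lemma tr_coclosure_superset:
  "X \<subseteq> E \<Longrightarrow> X \<subseteq> tr_coclosure E J A X"
  unfolding tr_coclosure_def mclosure_def by (auto simp: insert_absorb)

lemma presenting_path_graph:
  assumes "bij_betw \<phi> (set ps) {j \<in> J. e \<in> A j}"
    and between: "\<And>a b c. a < c \<Longrightarrow> c < b \<Longrightarrow> b < length ps \<Longrightarrow>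
      A (\<phi> (ps ! c)) \<subseteq> A (\<phi> (ps ! a)) \<union> A (\<phi> (ps ! b))"
  shows "presenting E J A e (set ps) (path_edges ps) \<phi>"
  unfolding presenting_def
proof (intro conjI assms(1) ballI impI)
  fix x y
  let ?C = "tr_coclosure E J A (A (\<phi> x) \<union> A (\<phi> y))"
  show "induced_connected (path_edges ps) {z \<in> set ps. A (\<phi> z) \<subseteq> ?C}"
  proof (rule induced_connected_path_interval)
    fix a b c assume "a < c" "c < b" "b < length ps"
      "ps ! a \<in> {z \<in> set ps. A (\<phi> z) \<subseteq> ?C}" "ps ! b \<in> {z \<in> set ps. A (\<phi> z) \<subseteq> ?C}"
    then show "ps ! c \<in> {z \<in> set ps. A (\<phi> z) \<subseteq> ?C}" using between[of a c b] by auto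
  qed auto
qed

lemma minimal_presenting_path_graph:
  assumes "distinct ps" "\<And>j. j \<in> J \<Longrightarrow> A j \<subseteq> E"
    and pres: "presenting E J A e (set ps) (path_edges ps) \<phi>"
  shows "minimal_presenting E J A e (set ps) (path_edges ps) \<phi>"
  unfolding minimal_presenting_def
proof (intro conjI pres ballI notI)
  fix ed assume "ed \<in> path_edges ps" and
    pres': "presenting E J A e (set ps) (path_edges ps - {ed}) \<phi>"
  then obtain i where i: "Suc i < length ps" "ed = {ps ! i, ps ! Suc i}"
    unfolding path_edges_def by auto
  let ?x = "ps ! i" and ?y = "ps ! Suc i"
  let ?S = "{z \<in> set ps. A (\<phi> z) \<subseteq> tr_coclosure E J A (A (\<phi> ?x) \<union> A (\<phi> ?y))}"
  have xy: "?x \<in> set ps" "?y \<in> set ps" "?x \<noteq> ?y"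
    using i assms(1) by (auto simp: nth_eq_iff_index_eq)
  moreover have "\<phi> ?x \<in> J" "\<phi> ?y \<in> J"
    using xy pres unfolding presenting_def bij_betw_def by auto
  ultimately have "?x \<in> ?S" "?y \<in> ?S"
    using assms(2) tr_coclosure_superset[of "A (\<phi> ?x) \<union> A (\<phi> ?y)" E J A] by auto
  moreover have "induced_connected (path_edges ps - {ed}) ?S"
    using pres' xy unfolding presenting_def by blast
  ultimately show False
    using path_edges_remove_disconnects[OF assms(1) i(1)] i(2)
    unfolding induced_connected_def by blast
qed

lemma the_index_nth:
  "distinct xs \<Longrightarrow> i < length xs \<Longrightarrow> (THE j. j < length xs \<and> xs ! j = xs ! i) = i"
  by (rule the_equality) (auto simp: nth_eq_iff_index_eq)

lemma bij_betw_the_index: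
  assumes "distinct xs"
  shows "bij_betw (\<lambda>u. THE i. i < length xs \<and> xs ! i = u) (set xs) {..<length xs}"
proof (rule bij_betw_byWitness[where f' = "(!) xs"])
  show "\<forall>i\<in>{..<length xs}. (THE j. j < length xs \<and> xs ! j = xs ! i) = i"
    using assms by (simp add: the_index_nth)
  then show "\<forall>u\<in>set xs. xs ! (THE i. i < length xs \<and> xs ! i = u) = u"
    "(\<lambda>u. THE i. i < length xs \<and> xs ! i = u) ` set xs \<subseteq> {..<length xs}"
    by (auto simp: in_set_conv_nth)
qed auto

lemma bij_betw_preimage_prefix:
  assumes w: "bij_betw w {..<n} V" and "distinct xs" "set xs \<subseteq> V"
    and "\<forall>i<length xs. w i = xs ! i"
  shows "{j \<in> {..<n}. w j \<in> set xs} = {..<length xs}"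
proof -
  have "length xs = card (set xs)" using distinct_card[OF assms(2)] by simp
  also have "\<dots> \<le> card V" using card_mono[OF bij_betw_finite[OF w, THEN iffD1] assms(3)] by simp
  finally have prefix: "length xs \<le> n" using bij_betw_same_card[OF w] by simp
  have img: "set xs = w ` {..<length xs}"
    using assms(4) by (auto simp: in_set_conv_nth image_iff)
  show ?thesis
  proof (intro set_eqI iffI)
    fix j assume "j \<in> {j \<in> {..<n}. w j \<in> set xs}"
    then obtain i where "i < length xs" "j < n" "w j = w i" using img by auto
    moreover from this prefix have "j = i"
      by (intro inj_onD[OF bij_betw_imp_inj_on[OF w]]) auto
    ultimately show "j \<in> {..<length xs}" by simp
  qed (use prefix img in auto)
qed

theorem lemma4p2:
  fixes V :: "'a set" and Eg :: "'a \<Rightarrow> 'a \<Rightarrow> bool"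
    and Q :: "'i set" and P :: "'i \<Rightarrow> 'a list" and p :: 'i and w :: "nat \<Rightarrow> 'a"
  assumes "simple_graph V Eg"
    and "finite Q"
    and "path_circular V Eg Q P"
    and "p \<in> Q"
    and "bij_betw w {..<card V} V"
    and "\<forall>i<length (P p). w i = P p ! i"
  shows "minimal_presenting Q {..<card V} (\<lambda>i. Nbhd Q P (w i)) p
           (set (P p)) {{P p ! i, P p ! Suc i} | i. Suc i < length (P p)}
           (\<lambda>u. THE i. i < length (P p) \<and> P p ! i = u)"
proof -
  let ?A = "\<lambda>i. Nbhd Q P (w i)" and ?\<phi> = "\<lambda>u. THE i. i < length (P p) \<and> P p ! i = u"
  have path: "distinct (P p)" "set (P p) \<subseteq> V"
    using assms(3,4) unfolding path_circular_def is_path_def by auto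
  have A_\<phi>: "?A (?\<phi> (P p ! i)) = Nbhd Q P (P p ! i)" if "i < length (P p)" for i
    using that path(1) assms(6) by (simp add: the_index_nth)
  have index_set: "{j \<in> {..<card V}. p \<in> ?A j} = {..<length (P p)}"
    using bij_betw_preimage_prefix[OF assms(5) path assms(6)] assms(4) unfolding Nbhd_def by simp
  have pres: "presenting Q {..<card V} ?A p (set (P p)) (path_edges (P p)) ?\<phi>"
  proof (rule presenting_path_graph)
    show "bij_betw ?\<phi> (set (P p)) {j \<in> {..<card V}. p \<in> ?A j}"
      using bij_betw_the_index[OF path(1)] index_set by simp
    fix a b c assume "a < c" "c < b" "b < length (P p)"
    then show "?A (?\<phi> (P p ! c)) \<subseteq> ?A (?\<phi> (P p ! a)) \<union> ?A (?\<phi> (P p ! b))"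
      using A_\<phi> Nbhd_between_subset[OF assms(1,3,4)] by simp
  qed
  have "?A j \<subseteq> Q" for j unfolding Nbhd_def by blast
  then show ?thesis
    using minimal_presenting_path_graph[OF path(1) _ pres] unfolding path_edges_def by blast
qed

end
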